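(* Let $U$ be a semiunitary space of dimension $n$ whose scalar product has rank $m$, and let $\mathcal A:U\to U$ be a linear operator. The following are equivalent: (a) $\mathcal A$ is bounded, i.e. there exists a positive $c\in\mathbb R$ with $\|\mathcal Au\|\le c\|u\|$ for all $u\in U$; (b) the subspace $U_0=\{u\in U : \langle u,u\rangle=0\}$ is invariant under $\mathcal A$; (c) the matrix of $\mathcal A$ in each $m$-orthonormal basis has the lower block triangular form $\begin{bmatrix}B&0\\C&D\end{bmatrix}$ with $B$ of size $m\times m$.
   Context: A semiunitary space is a finite-dimensional complex vector space $U$ with a positive semidefinite Hermitian form $\langle\cdot,\cdot\rangle$ (semilinear in the first argument, linear in the second). The length of $u$ is $\|u\|=\sqrt{\langle u,u\rangle}$. A basis $e_1,\dots,e_n$ of $U$ is $m$-orthonormal if the Gram matrix $[\langle e_i,e_j\rangle]$ equals $\begin{bmatrix}I_m&0\\0&0\end{bmatrix}$. The matrix of an operator in a basis has as its $j$-th column the coordinate vector of the image of the $j$-th basis vector. *)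

theory Defs
  imports "HOL-Analysis.Analysis"
begin

text \<open>A semiunitary space of dimension n is modelled (up to isomorphism) as
  complex^'n with n = CARD('n), together with a positive semidefinite Hermitian
  form f, semilinear in the first argument and linear in the second.\<close>

definition semiunitary_form :: "(complex^'n \<Rightarrow> complex^'n \<Rightarrow> complex) \<Rightarrow> bool" where
  "semiunitary_form f \<longleftrightarrow>
     (\<forall>u v w. f u (v + w) = f u v + f u w) \<and>
     (\<forall>c u v. f u (c *s v) = c * f u v) \<and>
     (\<forall>u v. f u v = cnj (f v u)) \<and>
     (\<forall>u. Im (f u u) = 0 \<and> 0 \<le> Re (f u u))"

definition form_norm :: "(complex^'n \<Rightarrow> complex^'n \<Rightarrow> complex) \<Rightarrow> complex^'n \<Rightarrow> real" where
  "form_norm f u = sqrt (Re (f u u))"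

definition form_rank :: "(complex^'n \<Rightarrow> complex^'n \<Rightarrow> complex) \<Rightarrow> nat" where
  "form_rank f = rank (\<chi> i j. f (axis i 1) (axis j 1) :: complex^'n^'n)"

definition is_ordered_basis :: "(nat \<Rightarrow> complex^'n) \<Rightarrow> bool" where
  "is_ordered_basis e \<longleftrightarrow>
     inj_on e {..<CARD('n)} \<and> vec.independent (e ` {..<CARD('n)}) \<and>
     vec.span (e ` {..<CARD('n)}) = UNIV"

definition m_orthonormal_basis ::
  "(complex^'n \<Rightarrow> complex^'n \<Rightarrow> complex) \<Rightarrow> nat \<Rightarrow> (nat \<Rightarrow> complex^'n) \<Rightarrow> bool" where
  "m_orthonormal_basis f m e \<longleftrightarrow> is_ordered_basis e \<and>
     (\<forall>i<CARD('n). \<forall>j<CARD('n). f (e i) (e j) = (if i = j \<and> i < m then 1 else 0))"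

definition matrix_entry ::
  "(nat \<Rightarrow> complex^'n) \<Rightarrow> (complex^'n \<Rightarrow> complex^'n) \<Rightarrow> nat \<Rightarrow> nat \<Rightarrow> complex" where
  "matrix_entry e A i j = vec.representation (e ` {..<CARD('n)}) (A (e j)) (e i)"

end

theory Submission
  imports Defs
begin

text \<open>The null vectors \<open>U\<^sub>0 = {u. f u u = 0}\<close> form the radical of the form (\<open>f u u = 0\<close>
  implies \<open>f v u = 0\<close> for all \<open>v\<close>), so \<open>U\<^sub>0\<close> is a subspace. Extending a maximal orthonormal
  family \<open>e 0, \<dots>, e (k - 1)\<close> by a basis of \<open>U\<^sub>0\<close> yields a \<open>k\<close>-orthonormal basis, and \<open>k\<close> is
  the rank of the Gram matrix: its rows span the same space as the \<open>k\<close> independent vectors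
  \<open>gram_row (e i)\<close>. In an \<open>m\<close>-orthonormal basis the squared length of \<open>u\<close> is
  \<open>\<Sum>l<m. \<bar>f (e l) u\<bar>\<^sup>2\<close> and \<open>U\<^sub>0\<close> is spanned by the \<open>e j\<close> with \<open>j \<ge> m\<close>. Hence the entries
  \<open>f (e i) (A (e j))\<close>, \<open>i < m \<le> j\<close>, all vanish iff \<open>A\<close> maps \<open>U\<^sub>0\<close> into itself, and in that
  case \<open>f (e l) (A u)\<close> depends only on the coordinates \<open>f (e i) u\<close>, \<open>i < m\<close>, which bounds the
  length of \<open>A u\<close> by a multiple of that of \<open>u\<close>. Conversely, a bounded operator maps vectors of
  length zero to vectors of length zero.\<close>

lemma inj_on_if_scalars_zero:
  fixes v :: "nat \<Rightarrow> 'a::field^'n"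
  assumes zero: "\<And>g. (\<Sum>i\<in>I. g i *s v i) = 0 \<Longrightarrow> \<forall>i\<in>I. g i = 0" and "finite I"
  shows "inj_on v I"
proof (rule inj_onI, rule ccontr)
  fix i j assume ij: "i \<in> I" "j \<in> I" "v i = v j" "i \<noteq> j"
  define g where "g k = (if k = i then 1 else if k = j then -1 else 0 :: 'a)" for k
  have "(\<Sum>k\<in>I. g k *s v k) = (\<Sum>k\<in>I. (if k = i then v i else 0) - (if k = j then v j else 0))"
    by (intro sum.cong) (auto simp: g_def ij)
  also have "\<dots> = 0"
    using ij \<open>finite I\<close> by (simp add: sum_subtractf)
  finally have "g i = 0"
    using zero ij by blast
  then show False
    by (simp add: g_def)
qed

lemma independent_image_if_scalars_zero:
  fixes v :: "nat \<Rightarrow> 'a::field^'n"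
  assumes zero: "\<And>g. (\<Sum>i\<in>I. g i *s v i) = 0 \<Longrightarrow> \<forall>i\<in>I. g i = 0" and "finite I"
  shows "vec.independent (v ` I)"
proof (rule vec.independent_if_scalars_zero)
  show "finite (v ` I)"
    using \<open>finite I\<close> by simp
  have inj: "inj_on v I"
    using assms by (rule inj_on_if_scalars_zero)
  fix h x assume h: "(\<Sum>x\<in>v ` I. h x *s x) = 0" and "x \<in> v ` I"
  then obtain i where "i \<in> I" "x = v i"
    by auto
  have "(\<Sum>i\<in>I. h (v i) *s v i) = 0"
    using h by (simp add: sum.reindex[OF inj])
  then have "\<forall>i\<in>I. h (v i) = 0"
    by (rule zero)
  then show "h x = 0"
    using \<open>i \<in> I\<close> \<open>x = v i\<close> by blast
qed

lemma is_ordered_basis_expansion: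
  fixes e :: "nat \<Rightarrow> complex^'n"
  assumes "is_ordered_basis e"
  shows "(\<Sum>i<CARD('n). vec.representation (e ` {..<CARD('n)}) u (e i) *s e i) = u"
proof -
  have "(\<Sum>v\<in>e ` {..<CARD('n)}. vec.representation (e ` {..<CARD('n)}) u v *s v) = u"
    using assms by (intro vec.sum_representation_eq) (auto simp: is_ordered_basis_def)
  then show ?thesis
    using assms by (simp add: is_ordered_basis_def sum.reindex)
qed

lemma ordered_basis_append:
  fixes e :: "nat \<Rightarrow> complex^'n"
  assumes inj: "inj_on e {..<k}" and "finite B" and disj: "e ` {..<k} \<inter> B = {}"
    and indep: "vec.independent (e ` {..<k} \<union> B)"
    and span: "vec.span (e ` {..<k} \<union> B) = UNIV"
  obtains E where "is_ordered_basis E" and "\<And>i. i < k \<Longrightarrow> E i = e i"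
    and "\<And>i. k \<le> i \<Longrightarrow> i < CARD('n) \<Longrightarrow> E i \<in> B"
proof -
  define S where "S = e ` {..<k} \<union> B"
  have "card S = CARD('n)"
    using vec.basis_card_eq_dim[of S UNIV] indep span vec_dim_card by (simp add: S_def)
  moreover have "card S = k + card B"
    unfolding S_def using disj inj \<open>finite B\<close> by (simp add: card_Un_disjoint card_image)
  ultimately have card_eq: "CARD('n) = k + card B"
    by simp
  obtain b where b: "bij_betw b {..<card B} B"
    using ex_bij_betw_nat_finite[OF \<open>finite B\<close>] by (auto simp: lessThan_atLeast0)
  define E where "E i = (if i < k then e i else b (i - k))" for i
  have E_tail: "E i \<in> B" if "k \<le> i" "i < CARD('n)" for i
    using that b card_eq by (auto simp: E_def bij_betw_def)
  have E_image: "E ` {..<CARD('n)} = S"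
  proof (intro equalityI subsetI)
    fix v assume "v \<in> E ` {..<CARD('n)}"
    then show "v \<in> S"
      using E_tail by (force simp: S_def E_def)
  next
    fix v assume "v \<in> S"
    then consider i where "i < k" "v = e i" | j where "j < card B" "v = b j"
      using b unfolding S_def bij_betw_def by blast
    then show "v \<in> E ` {..<CARD('n)}"
    proof cases
      case (1 i)
      then show ?thesis
        using card_eq by (auto simp: E_def intro!: image_eqI[of _ _ i])
    next
      case (2 j)
      then show ?thesis
        using card_eq by (auto simp: E_def intro!: image_eqI[of _ _ "k + j"])
    qed
  qed
  have "inj_on E {..<CARD('n)}"
    by (rule eq_card_imp_inj_on) (simp_all add: E_image \<open>card S = CARD('n)\<close>)
  then have "is_ordered_basis E"
    unfolding is_ordered_basis_def E_image using indep span by (simp add: S_def)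
  moreover have "E i = e i" if "i < k" for i
    using that by (simp add: E_def)
  ultimately show thesis
    using E_tail by (rule that)
qed

locale semiunitary =
  fixes f :: "complex^'n \<Rightarrow> complex^'n \<Rightarrow> complex"
  assumes semiunitary: "semiunitary_form f"
begin

lemma form_add_right: "f u (v + w) = f u v + f u w"
  using semiunitary unfolding semiunitary_form_def by blast

lemma form_scale_right: "f u (c *s v) = c * f u v"
  using semiunitary unfolding semiunitary_form_def by blast

lemma form_conj_sym: "f u v = cnj (f v u)"
  using semiunitary unfolding semiunitary_form_def by blast

lemma form_self_Im: "Im (f u u) = 0"
  using semiunitary unfolding semiunitary_form_def by blast

lemma form_self_real: "f u u = complex_of_real (Re (f u u))"
  using form_self_Im[of u] by (simp add: complex_eq_iff)

lemma form_self_nonneg: "0 \<le> Re (f u u)"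
  using semiunitary unfolding semiunitary_form_def by blast

lemma form_add_left: "f (u + v) w = f u w + f v w"
  by (subst (1 2 3) form_conj_sym) (simp add: form_add_right)

lemma form_scale_left: "f (c *s u) v = cnj c * f u v"
  by (subst (1 2) form_conj_sym) (simp add: form_scale_right)

lemma form_zero_right [simp]: "f u 0 = 0"
  using form_scale_right[of u 0 0] by simp

lemma form_zero_left [simp]: "f 0 u = 0"
  by (subst form_conj_sym) simp

lemma form_diff_right: "f u (v - w) = f u v - f u w"
  using form_add_right[of u "v - w" w] by simp

lemma form_diff_left: "f (u - v) w = f u w - f v w"
  using form_add_left[of "u - v" v w] by simp

lemma form_lincomb_right: "f u (\<Sum>i\<in>I. c i *s v i) = (\<Sum>i\<in>I. c i * f u (v i))"
  by (induction I rule: infinite_finite_induct) (simp_all add: form_add_right form_scale_right)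

lemma form_lincomb_left: "f (\<Sum>i\<in>I. c i *s v i) u = (\<Sum>i\<in>I. cnj (c i) * f (v i) u)"
  by (induction I rule: infinite_finite_induct) (simp_all add: form_add_left form_scale_left)

lemma form_norm_nonneg: "0 \<le> form_norm f u"
  by (simp add: form_norm_def form_self_nonneg)

text \<open>If \<open>Re (f v u) \<noteq> 0\<close> for a null vector \<open>u\<close>, then \<open>t \<mapsto> f (v + t u) (v + t u)\<close> is a
  real affine function of \<open>t\<close> with nonzero slope, so it takes negative values.\<close>

lemma form_null_right_Re:
  assumes "f u u = 0" shows "Re (f v u) = 0"
proof (rule ccontr)
  assume a: "Re (f v u) \<noteq> 0"
  define t where "t = - (Re (f v v) + 1) / (2 * Re (f v u))"
  define w where "w = v + complex_of_real t *s u"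
  have "f w w = f v v + complex_of_real t * (f v u + cnj (f v u))"
    using assms form_conj_sym[of u v]
    by (simp add: w_def form_add_left form_add_right form_scale_left form_scale_right algebra_simps)
  then have "Re (f w w) = Re (f v v) + 2 * t * Re (f v u)"
    by simp
  also have "\<dots> = -1"
    using a by (simp add: t_def field_simps)
  finally show False
    using form_self_nonneg[of w] by simp
qed

lemma form_null_right:
  assumes "f u u = 0" shows "f v u = 0"
proof -
  have "f (\<i> *s u) (\<i> *s u) = 0"
    using assms by (simp add: form_scale_left form_scale_right)
  then have "Re (f v (\<i> *s u)) = 0"
    by (rule form_null_right_Re)
  then have "Im (f v u) = 0"
    by (simp add: form_scale_right)
  with form_null_right_Re[OF assms] show ?thesis
    by (simp add: complex_eq_iff)
qed

lemma form_null_left: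
  assumes "f u u = 0" shows "f u v = 0"
  using form_null_right[OF assms, of v] form_conj_sym[of u v] by simp

lemma null_subspace: "vec.subspace {u. f u u = 0}"
proof (unfold vec.subspace_def, intro conjI ballI allI)
  fix u v assume "u \<in> {u. f u u = 0}" "v \<in> {u. f u u = 0}"
  then have "f u u = 0" "f v v = 0" "f u v = 0" "f v u = 0"
    using form_null_left by auto
  then show "u + v \<in> {u. f u u = 0}"
    by (simp add: form_add_left form_add_right)
next
  fix c u assume "u \<in> {u. f u u = 0}"
  then show "c *s u \<in> {u. f u u = 0}"
    by (simp add: form_scale_left form_scale_right)
qed simp

definition orthonormal_upto :: "nat \<Rightarrow> (nat \<Rightarrow> complex^'n) \<Rightarrow> bool" where
  "orthonormal_upto k e \<longleftrightarrow> (\<forall>i<k. \<forall>j<k. f (e i) (e j) = (if i = j then 1 else 0))"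

definition orth_proj :: "nat \<Rightarrow> (nat \<Rightarrow> complex^'n) \<Rightarrow> complex^'n \<Rightarrow> complex^'n" where
  "orth_proj k e v = (\<Sum>i<k. f (e i) v *s e i)"

lemma orthonormal_upto_coeff:
  assumes "orthonormal_upto k e" "l < k"
  shows "f (e l) (\<Sum>i<k. c i *s e i) = c l"
proof -
  have "f (e l) (\<Sum>i<k. c i *s e i) = (\<Sum>i<k. if i = l then c i else 0)"
    using assms unfolding form_lincomb_right orthonormal_upto_def by (intro sum.cong) auto
  then show ?thesis
    using assms(2) by simp
qed

lemma orthonormal_upto_orth_proj:
  assumes "orthonormal_upto k e" "l < k"
  shows "f (e l) (orth_proj k e v) = f (e l) v"
  unfolding orth_proj_def using assms by (rule orthonormal_upto_coeff)

lemma orthonormal_upto_inj_independent: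
  assumes "orthonormal_upto k e"
  shows "inj_on e {..<k}" and "vec.independent (e ` {..<k})"
proof -
  have "\<forall>i\<in>{..<k}. c i = 0" if "(\<Sum>i\<in>{..<k}. c i *s e i) = 0" for c
    using orthonormal_upto_coeff[OF assms, of _ c] that by auto
  then show "inj_on e {..<k}" and "vec.independent (e ` {..<k})"
    by (simp_all add: inj_on_if_scalars_zero independent_image_if_scalars_zero)
qed

lemma orthonormal_upto_le_card:
  assumes "orthonormal_upto k e"
  shows "k \<le> CARD('n)"
proof -
  have "k = card (e ` {..<k})"
    using orthonormal_upto_inj_independent(1)[OF assms] by (simp add: card_image)
  also have "\<dots> \<le> vec.dim (e ` {..<k})"
    using vec.independent_bound_general[OF orthonormal_upto_inj_independent(2)[OF assms]] by simp
  also have "\<dots> \<le> vec.dim (UNIV :: (complex^'n) set)"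
    by (rule vec.dim_subset) simp
  also have "\<dots> = CARD('n)"
    by (rule vec_dim_card)
  finally show ?thesis .
qed

lemma orthonormal_upto_extend:
  assumes orth: "orthonormal_upto k e" and w: "w = v - orth_proj k e v" and "f w w \<noteq> 0"
  shows "orthonormal_upto (Suc k) (e(k := complex_of_real (1 / sqrt (Re (f w w))) *s w))"
proof -
  define c where "c = complex_of_real (1 / sqrt (Re (f w w)))"
  have "Re (f w w) > 0"
    using \<open>f w w \<noteq> 0\<close> form_self_nonneg[of w] form_self_real[of w]
    by (metis less_eq_real_def of_real_0)
  then have "cnj c * c * f w w = 1"
    by (subst form_self_real) (simp add: c_def field_simps flip: of_real_mult)
  then have unit: "f (c *s w) (c *s w) = 1"
    by (simp add: form_scale_left form_scale_right mult.assoc mult.left_commute)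
  have orth_w: "f (e i) (c *s w) = 0" if "i < k" for i
    using orthonormal_upto_orth_proj[OF orth that] by (simp add: w form_scale_right form_diff_right)
  then have orth_w': "f (c *s w) (e i) = 0" if "i < k" for i
    using that form_conj_sym[of "c *s w" "e i"] by simp
  show ?thesis
    unfolding orthonormal_upto_def c_def[symmetric]
  proof (intro allI impI)
    fix i j assume "i < Suc k" "j < Suc k"
    then show "f ((e(k := c *s w)) i) ((e(k := c *s w)) j) = (if i = j then 1 else 0)"
      using orth unit orth_w orth_w' unfolding orthonormal_upto_def
      by (cases "i = k"; cases "j = k") simp_all
  qed
qed

lemma orthonormal_null_residue_exists:
  obtains k e where "orthonormal_upto k e"
    and "\<And>v. f (v - orth_proj k e v) (v - orth_proj k e v) = 0"
proof -
  have "\<exists>k. (\<exists>e. orthonormal_upto k e) \<and> (\<forall>k'. (\<exists>e. orthonormal_upto k' e) \<longrightarrow> k' \<le> k)"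
  proof (rule Nat.ex_has_greatest_nat[of _ 0 "CARD('n)"])
    show "\<exists>e. orthonormal_upto 0 e"
      by (simp add: orthonormal_upto_def)
  qed (use orthonormal_upto_le_card in blast)
  then obtain k e where orth: "orthonormal_upto k e"
    and max: "\<And>k' e'. orthonormal_upto k' e' \<Longrightarrow> k' \<le> k"
    by blast
  have residue: "f (v - orth_proj k e v) (v - orth_proj k e v) = 0" for v
  proof (rule ccontr)
    assume "f (v - orth_proj k e v) (v - orth_proj k e v) \<noteq> 0"
    then have "Suc k \<le> k"
      by (rule max[OF orthonormal_upto_extend[OF orth refl]])
    then show False
      by simp
  qed
  show thesis
    by (rule that[OF orth residue])
qed

lemma orthonormal_upto_null_disjoint:
  assumes "orthonormal_upto k e" and "B \<subseteq> {u. f u u = 0}"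
  shows "e ` {..<k} \<inter> B = {}"
  using assms by (force simp: orthonormal_upto_def)

lemma orthonormal_upto_Un_null_independent:
  assumes orth: "orthonormal_upto k e" and null: "B \<subseteq> {u. f u u = 0}"
    and indep: "vec.independent B"
  shows "vec.independent (e ` {..<k} \<union> B)"
proof -
  have finB: "finite B"
    using indep by (rule vec.finiteI_independent)
  have "\<forall>v\<in>e ` {..<k} \<union> B. c v = 0" if sum0: "(\<Sum>v\<in>e ` {..<k} \<union> B. c v *s v) = 0" for c
  proof -
    have split: "(\<Sum>v\<in>e ` {..<k} \<union> B. c v *s v) = (\<Sum>i<k. c (e i) *s e i) + (\<Sum>v\<in>B. c v *s v)"
      using orthonormal_upto_null_disjoint[OF orth null] finB
        orthonormal_upto_inj_independent(1)[OF orth]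
      by (simp add: sum.union_disjoint sum.reindex)
    have B_orth: "f (e l) (\<Sum>v\<in>B. c v *s v) = 0" for l
      unfolding form_lincomb_right
    proof (intro sum.neutral ballI)
      fix v assume "v \<in> B"
      then have "f v v = 0"
        using null by blast
      then show "c v * f (e l) v = 0"
        using form_null_right[of v "e l"] by simp
    qed
    have coeff: "c (e l) = 0" if "l < k" for l
    proof -
      have "c (e l) = f (e l) ((\<Sum>i<k. c (e i) *s e i) + (\<Sum>v\<in>B. c v *s v))"
        using orthonormal_upto_coeff[OF orth that, of "\<lambda>i. c (e i)"] B_orth[of l]
        by (simp only: form_add_right) simp
      also have "\<dots> = 0"
        using sum0 split by simp
      finally show ?thesis .
    qed
    then have "(\<Sum>v\<in>B. c v *s v) = 0"
      using sum0 split by simp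
    then have "\<forall>v\<in>B. c v = 0"
      using indep vec.independent_explicit by blast
    with coeff show ?thesis
      by auto
  qed
  then show ?thesis
    using finB by (simp add: vec.independent_explicit)
qed

lemma orthonormal_upto_Un_null_span:
  assumes residue: "\<And>v. f (v - orth_proj k e v) (v - orth_proj k e v) = 0"
    and null_span: "{u. f u u = 0} \<subseteq> vec.span B"
  shows "vec.span (e ` {..<k} \<union> B) = UNIV"
proof -
  have "v \<in> vec.span (e ` {..<k} \<union> B)" for v
  proof -
    have "orth_proj k e v \<in> vec.span (e ` {..<k} \<union> B)"
      unfolding orth_proj_def by (intro vec.span_sum vec.span_scale vec.span_base) auto
    moreover have "v - orth_proj k e v \<in> vec.span (e ` {..<k} \<union> B)"
      using residue null_span vec.span_mono[of B "e ` {..<k} \<union> B"] by blast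
    ultimately have "orth_proj k e v + (v - orth_proj k e v) \<in> vec.span (e ` {..<k} \<union> B)"
      by (rule vec.span_add)
    then show ?thesis
      by simp
  qed
  then show ?thesis
    by blast
qed

lemma ex_m_orthonormal_basis: "\<exists>k e. k \<le> CARD('n) \<and> m_orthonormal_basis f k e"
proof -
  obtain k e where orth: "orthonormal_upto k e"
    and residue: "\<And>v. f (v - orth_proj k e v) (v - orth_proj k e v) = 0"
    by (metis orthonormal_null_residue_exists)
  obtain B where B_null: "B \<subseteq> {u. f u u = 0}" and B_indep: "vec.independent B"
    and B_span: "{u. f u u = 0} \<subseteq> vec.span B"
    by (meson vec.basis_exists)
  obtain E where E: "is_ordered_basis E" and E_head: "\<And>i. i < k \<Longrightarrow> E i = e i"
    and E_tail: "\<And>i. k \<le> i \<Longrightarrow> i < CARD('n) \<Longrightarrow> E i \<in> B"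
    using ordered_basis_append[OF orthonormal_upto_inj_independent(1)[OF orth]
        vec.finiteI_independent[OF B_indep] orthonormal_upto_null_disjoint[OF orth B_null]
        orthonormal_upto_Un_null_independent[OF orth B_null B_indep]
        orthonormal_upto_Un_null_span[OF residue B_span]]
    by metis
  have "f (E i) (E j) = (if i = j \<and> i < k then 1 else 0)"
    if "i < CARD('n)" "j < CARD('n)" for i j
  proof (cases "i < k \<and> j < k")
    case True
    then show ?thesis
      using orth by (simp add: E_head orthonormal_upto_def)
  next
    case False
    then have "E i \<in> B \<or> E j \<in> B"
      using E_tail that by (meson not_less)
    then have "f (E i) (E i) = 0 \<or> f (E j) (E j) = 0"
      using B_null by blast
    then have "f (E i) (E j) = 0"
      using form_null_left form_null_right by blast
    then show ?thesis
      using False by auto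
  qed
  then have "m_orthonormal_basis f k E"
    using E by (simp add: m_orthonormal_basis_def)
  then show ?thesis
    using orthonormal_upto_le_card[OF orth] by blast
qed

definition gram_row :: "complex^'n \<Rightarrow> complex^'n" where
  "gram_row u = (\<chi> j. f u (axis j 1))"

lemma gram_row_lincomb: "gram_row (\<Sum>i\<in>I. c i *s v i) = (\<Sum>i\<in>I. cnj (c i) *s gram_row (v i))"
  by (simp add: gram_row_def vec_eq_iff form_lincomb_left sum_component)

lemma gram_row_cong: "(\<And>v. f u v = f w v) \<Longrightarrow> gram_row u = gram_row w"
  by (simp add: gram_row_def)

lemma form_eq_0_if_gram_row_eq_0:
  assumes "gram_row w = 0"
  shows "f w v = 0"
proof -
  have "f w v = f w (\<Sum>j\<in>UNIV. v $ j *s axis j 1)"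
    by (simp add: basis_expansion)
  also have "\<dots> = (\<Sum>j\<in>UNIV. v $ j * gram_row w $ j)"
    by (simp add: form_lincomb_right gram_row_def)
  finally show ?thesis
    using assms by simp
qed

definition gram_matrix :: "complex^'n^'n" where
  "gram_matrix = (\<chi> i j. f (axis i 1) (axis j 1))"

lemma rows_gram_matrix: "rows gram_matrix = range (\<lambda>i. gram_row (axis i 1))"
  by (auto simp: rows_def row_def gram_row_def gram_matrix_def)

context
  fixes e :: "nat \<Rightarrow> complex^'n" and m :: nat
  assumes mob: "m_orthonormal_basis f m e" and m_le: "m \<le> CARD('n)"
begin

lemma m_orthonormal_gram:
  "i < CARD('n) \<Longrightarrow> j < CARD('n) \<Longrightarrow> f (e i) (e j) = (if i = j \<and> i < m then 1 else 0)"
  using mob by (simp add: m_orthonormal_basis_def)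

lemma m_orthonormal_orthonormal_upto: "orthonormal_upto m e"
  using m_le by (simp add: orthonormal_upto_def m_orthonormal_gram)

lemma m_orthonormal_null: "m \<le> i \<Longrightarrow> i < CARD('n) \<Longrightarrow> f (e i) (e i) = 0"
  by (simp add: m_orthonormal_gram)

lemma m_orthonormal_coord:
  assumes "l < m"
  shows "f (e l) u = vec.representation (e ` {..<CARD('n)}) u (e l)"
proof -
  let ?c = "\<lambda>i. vec.representation (e ` {..<CARD('n)}) u (e i)"
  have "f (e l) u = f (e l) (\<Sum>i<CARD('n). ?c i *s e i)"
    using mob by (simp add: is_ordered_basis_expansion m_orthonormal_basis_def)
  also have "\<dots> = (\<Sum>i<CARD('n). if i = l then ?c i else 0)"
    unfolding form_lincomb_right using assms m_le by (intro sum.cong) (auto simp: m_orthonormal_gram)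
  also have "\<dots> = ?c l"
    using assms m_le by simp
  finally show ?thesis .
qed

lemma m_orthonormal_residue_in_span: "u - orth_proj m e u \<in> vec.span (e ` {m..<CARD('n)})"
proof -
  let ?c = "\<lambda>i. vec.representation (e ` {..<CARD('n)}) u (e i)"
  have "u = (\<Sum>i<CARD('n). ?c i *s e i)"
    using mob by (simp add: is_ordered_basis_expansion m_orthonormal_basis_def)
  also have "\<dots> = (\<Sum>i<m. ?c i *s e i) + (\<Sum>i\<in>{m..<CARD('n)}. ?c i *s e i)"
    using sum.atLeastLessThan_concat[of 0 m "CARD('n)" "\<lambda>i. ?c i *s e i"] m_le
    by (simp add: lessThan_atLeast0)
  finally have "u = (\<Sum>i<m. ?c i *s e i) + (\<Sum>i\<in>{m..<CARD('n)}. ?c i *s e i)" .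
  moreover have "(\<Sum>i<m. ?c i *s e i) = orth_proj m e u"
    unfolding orth_proj_def by (intro sum.cong) (simp_all add: m_orthonormal_coord)
  moreover have "(\<Sum>i\<in>{m..<CARD('n)}. ?c i *s e i) \<in> vec.span (e ` {m..<CARD('n)})"
    by (intro vec.span_sum vec.span_scale vec.span_base) auto
  ultimately show ?thesis
    by (metis add_diff_cancel_left')
qed

lemma m_orthonormal_span_null: "vec.span (e ` {m..<CARD('n)}) \<subseteq> {u. f u u = 0}"
  using m_orthonormal_null by (intro vec.span_minimal null_subspace) auto

lemma m_orthonormal_residue_null: "f (u - orth_proj m e u) (u - orth_proj m e u) = 0"
  using m_orthonormal_residue_in_span m_orthonormal_span_null by blast

lemma m_orthonormal_form_self: "f u u = (\<Sum>l<m. complex_of_real ((cmod (f (e l) u))\<^sup>2))"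
proof -
  have "f u (u - orth_proj m e u) = 0"
    using m_orthonormal_residue_null by (rule form_null_right)
  then have "f u u = f u (orth_proj m e u)"
    by (simp add: form_diff_right)
  also have "\<dots> = (\<Sum>l<m. f (e l) u * cnj (f (e l) u))"
    unfolding orth_proj_def form_lincomb_right by (metis form_conj_sym)
  finally show ?thesis
    by (simp only: complex_norm_square)
qed

lemma m_orthonormal_form_norm: "form_norm f u = L2_set (\<lambda>l. cmod (f (e l) u)) {..<m}"
  by (simp add: form_norm_def L2_set_def m_orthonormal_form_self flip: of_real_sum)

lemma m_orthonormal_null_iff: "f u u = 0 \<longleftrightarrow> (\<forall>l<m. f (e l) u = 0)"
proof -
  have "f u u = 0 \<longleftrightarrow> form_norm f u = 0"
    using form_self_nonneg[of u] by (subst form_self_real) (simp add: form_norm_def)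
  then show ?thesis
    by (auto simp: m_orthonormal_form_norm L2_set_eq_0_iff)
qed

lemma m_orthonormal_gram_row_scalars_zero:
  assumes "(\<Sum>i\<in>{..<m}. c i *s gram_row (e i)) = 0"
  shows "\<forall>i\<in>{..<m}. c i = 0"
proof
  fix l assume "l \<in> {..<m}"
  define w where "w = (\<Sum>i<m. cnj (c i) *s e i)"
  have "f (e l) w = cnj (c l)"
    unfolding w_def using \<open>l \<in> {..<m}\<close>
    by (simp add: orthonormal_upto_coeff[OF m_orthonormal_orthonormal_upto])
  moreover have "gram_row w = 0"
    using assms by (simp add: w_def gram_row_lincomb)
  then have "f w (e l) = 0"
    by (rule form_eq_0_if_gram_row_eq_0)
  ultimately show "c l = 0"
    using form_conj_sym[of w "e l"] by simp
qed

lemma m_orthonormal_span_rows_gram_matrix: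
  "vec.span (rows gram_matrix) = vec.span ((\<lambda>i. gram_row (e i)) ` {..<m})"
proof -
  have "gram_row (axis i 1) \<in> vec.span ((\<lambda>i. gram_row (e i)) ` {..<m})" for i
  proof -
    have "f (axis i 1 - orth_proj m e (axis i 1)) v = 0" for v
      using m_orthonormal_residue_null by (rule form_null_left)
    then have "gram_row (axis i 1) = gram_row (orth_proj m e (axis i 1))"
      by (intro gram_row_cong) (simp add: form_diff_left)
    also have "\<dots> \<in> vec.span ((\<lambda>i. gram_row (e i)) ` {..<m})"
      unfolding orth_proj_def gram_row_lincomb
      by (intro vec.span_sum vec.span_scale vec.span_base) auto
    finally show ?thesis .
  qed
  moreover have "gram_row (e l) \<in> vec.span (rows gram_matrix)" for l
  proof -
    have "gram_row (e l) = gram_row (\<Sum>j\<in>UNIV. e l $ j *s axis j 1)"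
      by (simp add: basis_expansion)
    also have "\<dots> \<in> vec.span (rows gram_matrix)"
      unfolding gram_row_lincomb rows_gram_matrix
      by (intro vec.span_sum vec.span_scale vec.span_base) auto
    finally show ?thesis .
  qed
  ultimately show ?thesis
    unfolding vec.span_eq rows_gram_matrix by auto
qed

lemma m_orthonormal_form_rank: "form_rank f = m"
proof -
  have "form_rank f = vec.dim ((\<lambda>i. gram_row (e i)) ` {..<m})"
    unfolding form_rank_def gram_matrix_def[symmetric] row_rank_def_gen
    by (metis vec.dim_span m_orthonormal_span_rows_gram_matrix)
  also have "\<dots> = m"
    using m_orthonormal_gram_row_scalars_zero
    by (simp add: vec.dim_eq_card_independent independent_image_if_scalars_zero
        inj_on_if_scalars_zero card_image)
  finally show ?thesis .
qed

lemma operator_coord_if_null_invariant: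
  assumes lin: "Vector_Spaces.linear (*s) (*s) A"
    and inv: "\<forall>u. f u u = 0 \<longrightarrow> f (A u) (A u) = 0"
  shows "f (e l) (A u) = (\<Sum>i<m. f (e i) u * f (e l) (A (e i)))"
proof -
  let ?r = "u - orth_proj m e u"
  have "f (A ?r) (A ?r) = 0"
    by (rule inv[rule_format, OF m_orthonormal_residue_null])
  then have null_part: "f (e l) (A ?r) = 0"
    by (rule form_null_right)
  have decomp: "A u = (\<Sum>i<m. f (e i) u *s A (e i)) + A ?r"
    by (simp add: orth_proj_def vec.linear_diff[OF lin] vec.linear_sum[OF lin]
        vec.linear_scale[OF lin])
  have "f (e l) (A u) = f (e l) (\<Sum>i<m. f (e i) u *s A (e i)) + f (e l) (A ?r)"
    by (subst decomp) (rule form_add_right)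
  then show ?thesis
    by (simp only: null_part form_lincomb_right add_0_right)
qed

lemma bounded_if_null_invariant:
  assumes lin: "Vector_Spaces.linear (*s) (*s) A"
    and inv: "\<forall>u. f u u = 0 \<longrightarrow> f (A u) (A u) = 0"
  shows "\<exists>c>0. \<forall>u. form_norm f (A u) \<le> c * form_norm f u"
proof -
  define K where "K = (\<Sum>l<m. \<Sum>i<m. cmod (f (e l) (A (e i))))"
  have row_bound: "cmod (f (e l) (A u)) \<le> form_norm f u * (\<Sum>i<m. cmod (f (e l) (A (e i))))"
    for l u
  proof -
    have "cmod (f (e l) (A u)) \<le> (\<Sum>i<m. cmod (f (e i) u) * cmod (f (e l) (A (e i))))"
      unfolding operator_coord_if_null_invariant[OF lin inv, of l u]
      by (rule order_trans[OF norm_sum]) (simp add: norm_mult)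
    moreover have "cmod (f (e i) u) \<le> form_norm f u" if "i < m" for i
      unfolding m_orthonormal_form_norm using that by (intro member_le_L2_set) auto
    then have "(\<Sum>i<m. cmod (f (e i) u) * cmod (f (e l) (A (e i))))
        \<le> (\<Sum>i<m. form_norm f u * cmod (f (e l) (A (e i))))"
      by (intro sum_mono mult_right_mono) auto
    ultimately show ?thesis
      by (simp add: sum_distrib_left)
  qed
  have bound: "form_norm f (A u) \<le> K * form_norm f u" for u
  proof -
    have "form_norm f (A u) \<le> (\<Sum>l<m. cmod (f (e l) (A u)))"
      unfolding m_orthonormal_form_norm by (rule L2_set_le_sum) (rule norm_ge_zero)
    moreover have "(\<Sum>l<m. cmod (f (e l) (A u)))
        \<le> (\<Sum>l<m. form_norm f u * (\<Sum>i<m. cmod (f (e l) (A (e i)))))"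
      using row_bound by (rule sum_mono)
    ultimately show ?thesis
      by (simp add: K_def sum_distrib_left mult.commute)
  qed
  have "K * form_norm f u \<le> (K + 1) * form_norm f u" for u
    using form_norm_nonneg[of u] by (simp add: distrib_right)
  moreover have "K \<ge> 0"
    unfolding K_def by (intro sum_nonneg) simp
  ultimately show ?thesis
    using bound by (intro exI[of _ "K + 1"]) (auto intro: order_trans)
qed

lemma block_triangular_if_null_invariant:
  assumes inv: "\<forall>u. f u u = 0 \<longrightarrow> f (A u) (A u) = 0"
    and "i < m" "m \<le> j" "j < CARD('n)"
  shows "matrix_entry e A i j = 0"
proof -
  have "f (A (e j)) (A (e j)) = 0"
    using inv m_orthonormal_null assms(3,4) by blast
  then have "f (e i) (A (e j)) = 0"
    by (rule form_null_right)
  then show ?thesis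
    using m_orthonormal_coord[OF \<open>i < m\<close>] by (simp add: matrix_entry_def)
qed

lemma null_invariant_if_block_triangular:
  assumes lin: "Vector_Spaces.linear (*s) (*s) A"
    and block: "\<And>i j. i < m \<Longrightarrow> m \<le> j \<Longrightarrow> j < CARD('n) \<Longrightarrow> matrix_entry e A i j = 0"
  shows "\<forall>u. f u u = 0 \<longrightarrow> f (A u) (A u) = 0"
proof (intro allI impI)
  fix u assume "f u u = 0"
  then have "orth_proj m e u = 0"
    unfolding orth_proj_def using form_null_right[OF \<open>f u u = 0\<close>] by simp
  then have "u \<in> vec.span (e ` {m..<CARD('n)})"
    using m_orthonormal_residue_in_span[of u] by simp
  then have "A u \<in> vec.span (A ` e ` {m..<CARD('n)})"
    using vec.linear_span_image[OF lin] by blast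
  also have "\<dots> \<subseteq> {v. f v v = 0}"
  proof (intro vec.span_minimal null_subspace subsetI)
    fix v assume "v \<in> A ` e ` {m..<CARD('n)}"
    then obtain j where j: "m \<le> j" "j < CARD('n)" and v: "v = A (e j)"
      by auto
    have "f (e l) (A (e j)) = 0" if "l < m" for l
      using block[OF that j] m_orthonormal_coord[OF that] by (simp add: matrix_entry_def)
    then show "v \<in> {v. f v v = 0}"
      unfolding v by (simp add: m_orthonormal_null_iff)
  qed
  finally show "f (A u) (A u) = 0"
    by simp
qed

end

lemma null_invariant_if_bounded:
  assumes "\<forall>u. form_norm f (A u) \<le> c * form_norm f u"
  shows "\<forall>u. f u u = 0 \<longrightarrow> f (A u) (A u) = 0"
proof (intro allI impI)
  fix u assume "f u u = 0"
  then have "form_norm f (A u) \<le> 0"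
    using assms[rule_format, of u] by (simp add: form_norm_def)
  then have "Re (f (A u) (A u)) = 0"
    using form_self_nonneg[of "A u"] by (simp add: form_norm_def)
  then show "f (A u) (A u) = 0"
    by (subst form_self_real) simp
qed

end

theorem lemma2p1:
  fixes f :: "complex^'n \<Rightarrow> complex^'n \<Rightarrow> complex"
    and A :: "complex^'n \<Rightarrow> complex^'n"
    and m :: nat
  assumes "semiunitary_form f"
    and "form_rank f = m"
    and "Vector_Spaces.linear (*s) (*s) A"
  shows "((\<exists>c::real. c > 0 \<and> (\<forall>u. form_norm f (A u) \<le> c * form_norm f u))
            \<longleftrightarrow> (\<forall>u. f u u = 0 \<longrightarrow> f (A u) (A u) = 0))
       \<and> ((\<forall>u. f u u = 0 \<longrightarrow> f (A u) (A u) = 0)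
            \<longleftrightarrow> (\<forall>e. m_orthonormal_basis f m e \<longrightarrow>
                   (\<forall>i j. i < m \<and> m \<le> j \<and> j < CARD('n) \<longrightarrow> matrix_entry e A i j = 0)))"
proof -
  interpret semiunitary f
    by (rule semiunitary.intro) (rule assms(1))
  obtain k e where "k \<le> CARD('n)" and "m_orthonormal_basis f k e"
    using ex_m_orthonormal_basis by blast
  moreover from this have "k = m"
    using m_orthonormal_form_rank assms(2) by simp
  ultimately have m_le: "m \<le> CARD('n)" and mob: "m_orthonormal_basis f m e"
    by simp_all
  show ?thesis
    using null_invariant_if_bounded bounded_if_null_invariant[OF mob m_le assms(3)]
      block_triangular_if_null_invariant[OF _ m_le]
      null_invariant_if_block_triangular[OF mob m_le assms(3)]
    by (meson mob)
qed

end
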